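(* Let $\gamma:S^1\to\mathbb{R}^{2d}$ be a closed symplectically convex curve, parametrized so that $\omega(\gamma'(t),\gamma''(t))=1$ for all $t$. Let $X=\{(v,t)\in\mathbb{R}^{2d}\times S^1:\omega(v,\gamma'(t))=0\}$, $\Psi:X\to\mathbb{R}^{2d}$, $\Psi(v,t)=\gamma(t)+v$, and let $\Sigma$ (the wall) be the set of singular values of $\Psi$. Then $$\Sigma=\{P\in\mathbb{R}^{2d}:\exists t\in S^1\ \text{with}\ \omega(P,\gamma'(t))=\omega(\gamma(t),\gamma'(t))\ \text{and}\ \omega(P,\gamma''(t))=\omega(\gamma(t),\gamma''(t))\}.$$ Moreover, the set $\Sigma^{\mathrm{sing}}$ of singular points of $\Sigma$ consists of those $P\in\mathbb{R}^{2d}$ for which there exists $t\in S^1$ with $\omega(P,\gamma'(t))=\omega(\gamma(t),\gamma'(t))$, $\omega(P,\gamma''(t))=\omega(\gamma(t),\gamma''(t))$, and $\omega(P,\gamma'''(t))=\omega(\gamma'(t),\gamma''(t))+\omega(\gamma(t),\gamma'''(t))$.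
   Context: $\mathbb{R}^{2d}$ carries the standard symplectic form $\omega$. A curve $\gamma$ is symplectically convex if $\omega(\gamma'(t),\gamma''(t))>0$ for all $t$. The image of $\Psi$ is the domain of the outer symplectic billiard relation of $\gamma$. Let $\Delta=\{(P,t)\in\mathbb{R}^{2d}\times S^1:\omega(P-\gamma(t),\gamma'(t))=0,\ \omega(P-\gamma(t),\gamma''(t))=0\}$ (a smooth $(2d-1)$-manifold), so that $\Sigma$ is its projection to $\mathbb{R}^{2d}$; a singular point of $\Sigma$ is a point $P$ such that for some $(P,t)\in\Delta$ the differential of the projection $\Delta\to\mathbb{R}^{2d}$ at $(P,t)$ has rank less than $2d-1$. *)

theory Defs
  imports "HOL-Analysis.Analysis"
begin

text \<open>Phase space R^{2d} is modelled as (real^'d) \<times> (real^'d), points (q,p),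
  with the standard symplectic form \<omega>((q,p),(q',p')) = q.p' - p.q'.\<close>

definition symp :: "(real^'d) \<times> (real^'d) \<Rightarrow> (real^'d) \<times> (real^'d) \<Rightarrow> real" where
  "symp x y = fst x \<bullet> snd y - snd x \<bullet> fst y"

definition tangent_space :: "'a::real_normed_vector set \<Rightarrow> 'a \<Rightarrow> 'a set" where
  "tangent_space S x = {v. \<exists>c::real \<Rightarrow> 'a. c 0 = x \<and> (\<forall>\<^sub>F s in nhds 0. c s \<in> S)
                          \<and> (c has_vector_derivative v) (at 0)}"

definition restr_rank :: "('a::real_normed_vector \<Rightarrow> 'b::real_normed_vector) \<Rightarrow> 'a set \<Rightarrow> 'a \<Rightarrow> nat" where
  "restr_rank f S x = dim (frechet_derivative f (at x) ` tangent_space S x)"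

definition singular_values :: "('a::real_normed_vector \<Rightarrow> 'b::euclidean_space) \<Rightarrow> 'a set \<Rightarrow> 'b set" where
  "singular_values f S = {f x | x. x \<in> S \<and> restr_rank f S x < DIM('b)}"

end

theory Submission
  imports Defs
begin

text \<open>Both X and \<Delta> are cut out by equations whose tangent spaces can be computed exactly:
  T X at (v,t) is {(a,s). \<omega>(a,\<gamma>') + s \<omega>(v,\<gamma>'') = 0} and
  T \<Delta> at (P,t) is {(b,s). \<omega>(b,\<gamma>') = 0 and \<omega>(b,\<gamma>'') = s (1 - \<omega>(P - \<gamma>,\<gamma>'''))};
  one inclusion comes from differentiating the defining equations, the other from explicit curves.
  The differential (a,s) \<mapsto> a + s \<gamma>' of \<Psi> is then onto exactly when \<omega>(v,\<gamma>'') \<noteq> 0, and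
  otherwise lands in the hyperplane \<omega>(-,\<gamma>') = 0. The projection (b,s) \<mapsto> b maps T \<Delta> onto
  that hyperplane unless \<omega>(P - \<gamma>,\<gamma>''') = 1, in which case its image lies in the intersection
  with \<omega>(-,\<gamma>'') = 0; the normalization \<omega>(\<gamma>',\<gamma>'') = 1 makes that intersection have
  codimension two.\<close>

definition symp_J :: "(real^'d) \<times> (real^'d) \<Rightarrow> (real^'d) \<times> (real^'d)" where
  "symp_J y = (snd y, - fst y)"

lemma symp_eq_inner_symp_J: "symp x y = symp_J y \<bullet> x"
  by (cases x; cases y) (simp add: symp_def symp_J_def inner_Pair inner_commute)

lemma symp_J_eq_0_iff [simp]: "symp_J y = 0 \<longleftrightarrow> y = 0"
  by (cases y) (auto simp: symp_J_def zero_prod_def)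

lemma bounded_bilinear_symp: "bounded_bilinear symp"
proof -
  have "bounded_linear symp_J"
    unfolding symp_J_def by (intro bounded_linear_Pair bounded_linear_snd bounded_linear_minus bounded_linear_fst)
  then have "bounded_bilinear (\<lambda>x y. symp_J y \<bullet> x)"
    using bounded_bilinear.comp[OF bounded_bilinear_inner bounded_linear_ident]
    by (simp add: inner_commute)
  then show ?thesis by (simp add: symp_eq_inner_symp_J[abs_def])
qed

lemma symp_add_left: "symp (x + y) z = symp x z + symp y z"
  and symp_add_right: "symp z (x + y) = symp z x + symp z y"
  and symp_diff_left: "symp (x - y) z = symp x z - symp y z"
  and symp_diff_right: "symp z (x - y) = symp z x - symp z y"
  and symp_scaleR_left: "symp (a *\<^sub>R x) z = a * symp x z"
  and symp_scaleR_right: "symp z (a *\<^sub>R x) = a * symp z x"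
  and symp_minus_left: "symp (- x) z = - symp x z"
  and symp_minus_right: "symp z (- x) = - symp z x"
  and symp_zero_left: "symp 0 z = 0"
  and symp_zero_right: "symp z 0 = 0"
  and symp_self: "symp x x = 0"
  by (auto simp: symp_def inner_add_left inner_add_right inner_diff_left inner_diff_right
      inner_commute algebra_simps)

lemmas symp_simps = symp_add_left symp_add_right symp_diff_left symp_diff_right
  symp_scaleR_left symp_scaleR_right symp_minus_left symp_minus_right
  symp_zero_left symp_zero_right symp_self

lemma symp_commute: "symp x y = - symp y x"
  by (simp add: symp_def inner_commute)

lemma has_derivative_symp [derivative_intros]:
  "(f has_derivative f') (at x within S) \<Longrightarrow> (g has_derivative g') (at x within S) \<Longrightarrow>
    ((\<lambda>x. symp (f x) (g x)) has_derivative (\<lambda>h. symp (f x) (g' h) + symp (f' h) (g x))) (at x within S)"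
  by (rule bounded_bilinear.FDERIV[OF bounded_bilinear_symp])

lemma has_vector_derivative_symp [derivative_intros]:
  "(f has_vector_derivative f') (at x within S) \<Longrightarrow> (g has_vector_derivative g') (at x within S) \<Longrightarrow>
    ((\<lambda>x. symp (f x) (g x)) has_field_derivative (symp (f x) g' + symp f' (g x))) (at x within S)"
  using bounded_bilinear.has_vector_derivative[OF bounded_bilinear_symp]
  by (simp add: has_real_derivative_iff_has_vector_derivative)

lemma dim_symp_orthogonal:
  fixes u :: "(real^'d) \<times> (real^'d)"
  assumes "u \<noteq> 0"
  shows "dim {x. symp x u = 0} = DIM((real^'d) \<times> (real^'d)) - 1"
  using dim_hyperplane[of "symp_J u"] assms by (simp add: symp_eq_inner_symp_J)

lemma dim_symp_orthogonal2_less: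
  fixes u :: "(real^'d) \<times> (real^'d)"
  assumes "u \<noteq> 0" and "symp w u = 0" and "symp w u' \<noteq> 0"
  shows "dim {x. symp x u = 0 \<and> symp x u' = 0} < DIM((real^'d) \<times> (real^'d)) - 1"
proof -
  let ?H = "{x. symp x u = 0}" and ?W = "{x. symp x u = 0 \<and> symp x u' = 0}"
  have "subspace ?H" "subspace ?W"
    by (auto simp: subspace_def symp_simps)
  moreover have "?W \<subset> ?H"
    using assms by auto
  ultimately have "dim ?W < dim ?H"
    by (intro dim_psubset) (simp add: span_eq_iff[THEN iffD2])
  then show ?thesis
    using dim_symp_orthogonal[OF assms(1)] by simp
qed

lemma tangent_spaceI:
  assumes "c 0 = x" and "\<And>\<tau>. c \<tau> \<in> S" and "(c has_vector_derivative u) (at 0)"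
  shows "u \<in> tangent_space S x"
  using assms unfolding tangent_space_def by (blast intro: always_eventually)

lemma tangent_space_annihilated:
  fixes g :: "'a::real_normed_vector \<Rightarrow> 'b::real_normed_vector"
  assumes g: "(g has_derivative g') (at x)" and S: "\<And>y. y \<in> S \<Longrightarrow> g y = 0"
    and u: "u \<in> tangent_space S x"
  shows "g' u = 0"
proof -
  obtain c where c: "c 0 = x" "\<forall>\<^sub>F \<tau> in nhds 0. c \<tau> \<in> S" "(c has_vector_derivative u) (at 0)"
    using u unfolding tangent_space_def by blast
  have "((\<lambda>\<tau>. g (c \<tau>)) has_vector_derivative g' u) (at 0)"
    using has_derivative_compose[OF c(3)[unfolded has_vector_derivative_def] g[folded c(1)]]
    using linear_cmul[OF has_derivative_linear[OF g]]
    by (simp add: has_vector_derivative_def)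
  moreover have "((\<lambda>\<tau>. g (c \<tau>)) has_vector_derivative 0) (at 0)"
  proof -
    have "\<forall>\<^sub>F \<tau> in nhds 0. g (c \<tau>) = 0"
      using c(2) by (auto intro: S elim: eventually_mono)
    then have "\<forall>\<^sub>F \<tau> in at 0. 0 = g (c \<tau>)" and "0 = g (c 0)"
      by (auto simp: eventually_at_filter dest: eventually_nhds_x_imp_x elim: eventually_mono)
    then have "((\<lambda>\<tau>. g (c \<tau>)) has_derivative (\<lambda>_. 0)) (at 0)"
      by (intro has_derivative_transform_eventually[OF has_derivative_const]) auto
    then show ?thesis
      by (simp add: has_vector_derivative_def)
  qed
  ultimately show ?thesis
    using vector_derivative_unique_at by blast
qed

locale normalized_convex_curve =
  fixes D :: "nat \<Rightarrow> real \<Rightarrow> (real^'d) \<times> (real^'d)"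
  assumes has_vector_derivative_D: "\<And>k t. (D k has_vector_derivative D (Suc k) t) (at t)"
    and symp_D1_D2: "\<And>t. symp (D 1 t) (D 2 t) = 1"
begin

lemma symp_D2_D1: "symp (D 2 t) (D 1 t) = -1"
  using symp_commute[of "D 2 t" "D 1 t"] symp_D1_D2[of t] by linarith

lemma D1_nonzero: "D 1 t \<noteq> 0"
  using symp_D1_D2[of t] by (auto simp: symp_simps)

lemma has_derivative_D [derivative_intros]:
  assumes "(f has_derivative f') (at x within S)"
  shows "((\<lambda>y. D k (f y)) has_derivative (\<lambda>h. f' h *\<^sub>R D (Suc k) (f x))) (at x within S)"
  using has_derivative_compose[OF assms has_vector_derivative_D[unfolded has_vector_derivative_def]] .

lemma has_vector_derivative_D_comp [derivative_intros]:
  assumes "(f has_field_derivative s) (at x within S)"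
  shows "((\<lambda>y. D k (f y)) has_vector_derivative s *\<^sub>R D (Suc k) (f x)) (at x within S)"
  using has_derivative_D[OF assms[unfolded has_field_derivative_def]]
  by (simp add: has_vector_derivative_def mult.commute)

definition orth_bundle :: "(((real^'d) \<times> (real^'d)) \<times> real) set" where
  "orth_bundle = {(v, t). symp v (D 1 t) = 0}"

lemma tangent_space_orth_bundle:
  assumes "(v, t) \<in> orth_bundle"
  shows "tangent_space orth_bundle (v, t) = {(a, s). symp a (D 1 t) + s * symp v (D 2 t) = 0}"
proof (intro subset_antisym subsetI)
  fix u assume tangent: "u \<in> tangent_space orth_bundle (v, t)"
  have derivative: "((\<lambda>y. symp (fst y) (D 1 (snd y))) has_derivative
      (\<lambda>h. symp v (snd h *\<^sub>R D 2 t) + symp (fst h) (D 1 t))) (at (v, t))"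
    by (auto intro!: derivative_eq_intros simp: numeral_2_eq_2)
  have "symp v (snd u *\<^sub>R D 2 t) + symp (fst u) (D 1 t) = 0"
    by (rule tangent_space_annihilated[OF derivative _ tangent]) (auto simp: orth_bundle_def)
  then show "u \<in> {(a, s). symp a (D 1 t) + s * symp v (D 2 t) = 0}"
    by (auto simp: symp_simps)
next
  fix u assume "u \<in> {(a, s). symp a (D 1 t) + s * symp v (D 2 t) = 0}"
  then obtain a s where u: "u = (a, s)" and constraint: "symp a (D 1 t) + s * symp v (D 2 t) = 0"
    by blast
  define w where "w \<tau> = v + \<tau> *\<^sub>R a" for \<tau> :: real
  define \<theta> where "\<theta> \<tau> = t + \<tau> * s" for \<tau> :: real
  \<comment> \<open>w \<mapsto> w + \<omega>(w,\<gamma>') \<gamma>'' projects onto \<omega>(-,\<gamma>') = 0 because \<omega>(\<gamma>'',\<gamma>') = -1.\<close>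
  define c where "c \<tau> = (w \<tau> + symp (w \<tau>) (D 1 (\<theta> \<tau>)) *\<^sub>R D 2 (\<theta> \<tau>), \<theta> \<tau>)" for \<tau>
  show "u \<in> tangent_space orth_bundle (v, t)"
    unfolding u
  proof (rule tangent_spaceI)
    show "c 0 = (v, t)"
      using assms by (simp add: c_def w_def \<theta>_def orth_bundle_def)
    show "c \<tau> \<in> orth_bundle" for \<tau>
      using symp_D2_D1 by (simp add: c_def orth_bundle_def symp_simps)
    show "(c has_vector_derivative (a, s)) (at 0)"
    proof -
      have w': "(w has_vector_derivative a) (at 0)"
        unfolding w_def by (auto intro!: derivative_eq_intros)
      have \<theta>': "(\<theta> has_field_derivative s) (at 0)"
        unfolding \<theta>_def by (auto intro!: derivative_eq_intros)
      show ?thesis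
        unfolding c_def
        by (rule has_vector_derivative_eq_rhs,
            (rule derivative_eq_intros w' \<theta>' \<theta>'[unfolded has_real_derivative_iff_has_vector_derivative] refl)+)
          (use assms constraint in \<open>simp add: w_def \<theta>_def orth_bundle_def symp_simps numeral_2_eq_2\<close>)
    qed
  qed
qed

definition wall_incidence :: "(((real^'d) \<times> (real^'d)) \<times> real) set" where
  "wall_incidence = {(P, t). symp (P - D 0 t) (D 1 t) = 0 \<and> symp (P - D 0 t) (D 2 t) = 0}"

lemma tangent_space_wall_incidence:
  assumes "(P, t) \<in> wall_incidence"
  shows "tangent_space wall_incidence (P, t) =
    {(b, s). symp b (D 1 t) = 0 \<and> symp b (D 2 t) = s * (1 - symp (P - D 0 t) (D 3 t))}"
proof (intro subset_antisym subsetI)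
  fix u assume tangent: "u \<in> tangent_space wall_incidence (P, t)"
  have "symp (P - D 0 t) (snd u *\<^sub>R D (Suc j) t) + symp (fst u - snd u *\<^sub>R D 1 t) (D j t) = 0"
    if "j = 1 \<or> j = 2" for j
  proof (rule tangent_space_annihilated[OF _ _ tangent])
    show "((\<lambda>y. symp (fst y - D 0 (snd y)) (D j (snd y))) has_derivative
        (\<lambda>h. symp (P - D 0 t) (snd h *\<^sub>R D (Suc j) t) + symp (fst h - snd h *\<^sub>R D 1 t) (D j t))) (at (P, t))"
      by (auto intro!: derivative_eq_intros)
    show "symp (fst y - D 0 (snd y)) (D j (snd y)) = 0" if "y \<in> wall_incidence" for y
      using that \<open>j = 1 \<or> j = 2\<close> by (auto simp: wall_incidence_def)
  qed
  from this[of 1] this[of 2] assms symp_D1_D2[of t]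
  show "u \<in> {(b, s). symp b (D 1 t) = 0 \<and> symp b (D 2 t) = s * (1 - symp (P - D 0 t) (D 3 t))}"
    by (auto simp: wall_incidence_def symp_simps numeral_2_eq_2 numeral_3_eq_3 algebra_simps)
next
  fix u assume "u \<in> {(b, s). symp b (D 1 t) = 0 \<and> symp b (D 2 t) = s * (1 - symp (P - D 0 t) (D 3 t))}"
  then obtain b s where u: "u = (b, s)" and constraint: "symp b (D 1 t) = 0"
      "symp b (D 2 t) = s * (1 - symp (P - D 0 t) (D 3 t))"
    by blast
  define \<theta> where "\<theta> \<tau> = t + \<tau> * s" for \<tau> :: real
  define Q where "Q \<tau> = P + \<tau> *\<^sub>R b" for \<tau> :: real
  define e where "e j \<tau> = symp (Q \<tau> - D 0 (\<theta> \<tau>)) (D j (\<theta> \<tau>))" for j \<tau>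
  \<comment> \<open>The analogous projection onto the fibre of \<Delta>, along the span of \<gamma>' and \<gamma>''.\<close>
  define c where "c \<tau> = (Q \<tau> - e 2 \<tau> *\<^sub>R D 1 (\<theta> \<tau>) + e 1 \<tau> *\<^sub>R D 2 (\<theta> \<tau>), \<theta> \<tau>)" for \<tau>
  show "u \<in> tangent_space wall_incidence (P, t)"
    unfolding u
  proof (rule tangent_spaceI)
    show "c 0 = (P, t)"
      using assms by (simp add: c_def e_def Q_def \<theta>_def wall_incidence_def)
    show "c \<tau> \<in> wall_incidence" for \<tau>
      using symp_D1_D2 symp_D2_D1
      by (simp add: c_def e_def wall_incidence_def symp_simps algebra_simps)
    have Q': "(Q has_vector_derivative b) (at 0)"
      unfolding Q_def by (auto intro!: derivative_eq_intros)
    have \<theta>': "(\<theta> has_field_derivative s) (at 0)"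
      unfolding \<theta>_def by (auto intro!: derivative_eq_intros)
    show "(c has_vector_derivative (b, s)) (at 0)"
      unfolding c_def e_def
      by (rule has_vector_derivative_eq_rhs,
          (rule derivative_eq_intros Q' \<theta>' \<theta>'[unfolded has_real_derivative_iff_has_vector_derivative] refl)+)
        (use assms constraint symp_D1_D2[of t] in \<open>simp add: Q_def \<theta>_def wall_incidence_def symp_simps
          numeral_2_eq_2 numeral_3_eq_3 algebra_simps\<close>)
  qed
qed

lemma restr_rank_orth_bundle_less_iff:
  assumes "(v, t) \<in> orth_bundle"
  shows "restr_rank (\<lambda>(v, t). D 0 t + v) orth_bundle (v, t) < DIM((real^'d) \<times> (real^'d))
    \<longleftrightarrow> symp v (D 2 t) = 0"
proof -
  define I where "I = (\<lambda>h. fst h + snd h *\<^sub>R D 1 t) ` tangent_space orth_bundle (v, t)"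
  have derivative: "((\<lambda>(v, t). D 0 t + v) has_derivative (\<lambda>h. fst h + snd h *\<^sub>R D 1 t)) (at (v, t))"
    unfolding case_prod_unfold by (auto intro!: derivative_eq_intros)
  have rank: "restr_rank (\<lambda>(v, t). D 0 t + v) orth_bundle (v, t) = dim I"
    unfolding restr_rank_def I_def frechet_derivative_at[OF derivative, symmetric] ..
  show ?thesis
  proof
    assume "symp v (D 2 t) = 0"
    then have "I \<subseteq> {y. symp y (D 1 t) = 0}"
      by (auto simp: I_def tangent_space_orth_bundle[OF assms] symp_simps)
    then have "dim I \<le> DIM((real^'d) \<times> (real^'d)) - 1"
      using dim_subset dim_symp_orthogonal[OF D1_nonzero] by metis
    then show "restr_rank (\<lambda>(v, t). D 0 t + v) orth_bundle (v, t) < DIM((real^'d) \<times> (real^'d))"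
      unfolding rank using DIM_positive[where 'a = "(real^'d) \<times> (real^'d)"] by linarith
  next
    assume "restr_rank (\<lambda>(v, t). D 0 t + v) orth_bundle (v, t) < DIM((real^'d) \<times> (real^'d))"
    show "symp v (D 2 t) = 0"
    proof (rule ccontr)
      assume \<sigma>: "symp v (D 2 t) \<noteq> 0"
      have "y \<in> I" for y
      proof -
        define s where "s = - symp y (D 1 t) / symp v (D 2 t)"
        have "(y - s *\<^sub>R D 1 t, s) \<in> tangent_space orth_bundle (v, t)"
          using \<sigma> by (simp add: tangent_space_orth_bundle[OF assms] symp_simps s_def)
        then show ?thesis
          unfolding I_def by force
      qed
      then have "dim I = DIM((real^'d) \<times> (real^'d))"
        by (metis UNIV_eq_I dim_UNIV)
      then show False
        using \<open>restr_rank _ _ _ < _\<close> rank by simp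
    qed
  qed
qed

lemma restr_rank_wall_incidence_less_iff:
  assumes "(P, t) \<in> wall_incidence"
  shows "restr_rank fst wall_incidence (P, t) < DIM((real^'d) \<times> (real^'d)) - 1
    \<longleftrightarrow> symp (P - D 0 t) (D 3 t) = 1"
proof -
  define \<kappa> where "\<kappa> = 1 - symp (P - D 0 t) (D 3 t)"
  define I where "I = fst ` tangent_space wall_incidence (P, t)"
  have "frechet_derivative fst (at (P, t)) = fst"
    by (rule frechet_derivative_at[OF has_derivative_fst[OF has_derivative_ident], symmetric])
  then have rank: "restr_rank fst wall_incidence (P, t) = dim I"
    by (simp add: restr_rank_def I_def)
  have tangent: "(b, s) \<in> tangent_space wall_incidence (P, t) \<longleftrightarrow>
      symp b (D 1 t) = 0 \<and> symp b (D 2 t) = s * \<kappa>" for b s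
    by (simp add: tangent_space_wall_incidence[OF assms] \<kappa>_def)
  show ?thesis
  proof
    assume rank_less: "restr_rank fst wall_incidence (P, t) < DIM((real^'d) \<times> (real^'d)) - 1"
    show "symp (P - D 0 t) (D 3 t) = 1"
    proof (rule ccontr)
      assume "symp (P - D 0 t) (D 3 t) \<noteq> 1"
      then have "\<kappa> \<noteq> 0"
        by (simp add: \<kappa>_def)
      have "{b. symp b (D 1 t) = 0} \<subseteq> I"
      proof
        fix b assume "b \<in> {b. symp b (D 1 t) = 0}"
        then have "(b, symp b (D 2 t) / \<kappa>) \<in> tangent_space wall_incidence (P, t)"
          using \<open>\<kappa> \<noteq> 0\<close> by (simp add: tangent)
        then show "b \<in> I"
          unfolding I_def by force
      qed
      then have "DIM((real^'d) \<times> (real^'d)) - 1 \<le> dim I"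
        using dim_subset dim_symp_orthogonal[OF D1_nonzero] by metis
      then show False
        using rank_less rank by simp
    qed
  next
    assume "symp (P - D 0 t) (D 3 t) = 1"
    then have "I \<subseteq> {b. symp b (D 1 t) = 0 \<and> symp b (D 2 t) = 0}"
      by (auto simp: I_def tangent \<kappa>_def)
    moreover have "dim {b. symp b (D 1 t) = 0 \<and> symp b (D 2 t) = 0} < DIM((real^'d) \<times> (real^'d)) - 1"
      by (rule dim_symp_orthogonal2_less[OF D1_nonzero, of "D 1 t"]) (use symp_D1_D2[of t] in \<open>simp_all add: symp_self\<close>)
    ultimately show "restr_rank fst wall_incidence (P, t) < DIM((real^'d) \<times> (real^'d)) - 1"
      unfolding rank using dim_subset le_less_trans by blast
  qed
qed

lemma singular_values_orth_bundle:
  "singular_values (\<lambda>(v, t). D 0 t + v) orth_bundle =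
    {P. \<exists>t. symp P (D 1 t) = symp (D 0 t) (D 1 t) \<and> symp P (D 2 t) = symp (D 0 t) (D 2 t)}"
proof (intro set_eqI iffI)
  fix P assume "P \<in> singular_values (\<lambda>(v, t). D 0 t + v) orth_bundle"
  then obtain v t where v: "(v, t) \<in> orth_bundle" and P: "P = D 0 t + v"
    and "restr_rank (\<lambda>(v, t). D 0 t + v) orth_bundle (v, t) < DIM((real^'d) \<times> (real^'d))"
    unfolding singular_values_def by auto
  then have "symp v (D 1 t) = 0 \<and> symp v (D 2 t) = 0"
    using restr_rank_orth_bundle_less_iff[OF v] by (simp add: orth_bundle_def)
  then show "P \<in> {P. \<exists>t. symp P (D 1 t) = symp (D 0 t) (D 1 t) \<and> symp P (D 2 t) = symp (D 0 t) (D 2 t)}"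
    unfolding P by (intro CollectI exI[of _ t]) (simp add: symp_simps)
next
  fix P assume "P \<in> {P. \<exists>t. symp P (D 1 t) = symp (D 0 t) (D 1 t) \<and> symp P (D 2 t) = symp (D 0 t) (D 2 t)}"
  then obtain t where "symp P (D 1 t) = symp (D 0 t) (D 1 t)" "symp P (D 2 t) = symp (D 0 t) (D 2 t)"
    by blast
  then have "(P - D 0 t, t) \<in> orth_bundle" and "symp (P - D 0 t) (D 2 t) = 0"
    by (simp_all add: orth_bundle_def symp_simps)
  moreover have "P = (\<lambda>(v, t). D 0 t + v) (P - D 0 t, t)"
    by simp
  ultimately show "P \<in> singular_values (\<lambda>(v, t). D 0 t + v) orth_bundle"
    unfolding singular_values_def using restr_rank_orth_bundle_less_iff by blast
qed

lemma singular_points_wall: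
  "{P. \<exists>t. (P, t) \<in> wall_incidence \<and> restr_rank fst wall_incidence (P, t) < DIM((real^'d) \<times> (real^'d)) - 1} =
    {P. \<exists>t. symp P (D 1 t) = symp (D 0 t) (D 1 t) \<and> symp P (D 2 t) = symp (D 0 t) (D 2 t)
      \<and> symp P (D 3 t) = symp (D 1 t) (D 2 t) + symp (D 0 t) (D 3 t)}"
proof -
  have "(P, t) \<in> wall_incidence \<and> restr_rank fst wall_incidence (P, t) < DIM((real^'d) \<times> (real^'d)) - 1 \<longleftrightarrow>
      symp P (D 1 t) = symp (D 0 t) (D 1 t) \<and> symp P (D 2 t) = symp (D 0 t) (D 2 t)
      \<and> symp P (D 3 t) = symp (D 1 t) (D 2 t) + symp (D 0 t) (D 3 t)" for P t
  proof (cases "(P, t) \<in> wall_incidence")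
    case True
    then show ?thesis
      using restr_rank_wall_incidence_less_iff[OF True] symp_D1_D2[of t]
      by (auto simp: wall_incidence_def symp_simps)
  next
    case False
    then show ?thesis
      by (auto simp: wall_incidence_def symp_simps)
  qed
  then show ?thesis
    by blast
qed

end

theorem mainTheorem9:
  fixes D :: "nat \<Rightarrow> real \<Rightarrow> (real^'d) \<times> (real^'d)"
    and L :: real
  assumes smooth: "\<And>k t. (D k has_vector_derivative D (Suc k) t) (at t)"
    and closed: "L > 0" "\<And>t. D 0 (t + L) = D 0 t"
    and normalized: "\<And>t. symp (D 1 t) (D 2 t) = 1"
  defines "X \<equiv> {(v, t). symp v (D 1 t) = 0}"
    and "\<Psi> \<equiv> (\<lambda>(v, t). D 0 t + v)"
    and "\<Delta> \<equiv> {(P, t). symp (P - D 0 t) (D 1 t) = 0 \<and> symp (P - D 0 t) (D 2 t) = 0}"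
  shows "singular_values \<Psi> X =
           {P. \<exists>t. symp P (D 1 t) = symp (D 0 t) (D 1 t) \<and> symp P (D 2 t) = symp (D 0 t) (D 2 t)}
       \<and> {P. \<exists>t. (P, t) \<in> \<Delta> \<and> restr_rank fst \<Delta> (P, t) < DIM((real^'d) \<times> (real^'d)) - 1} =
           {P. \<exists>t. symp P (D 1 t) = symp (D 0 t) (D 1 t) \<and> symp P (D 2 t) = symp (D 0 t) (D 2 t)
                 \<and> symp P (D 3 t) = symp (D 1 t) (D 2 t) + symp (D 0 t) (D 3 t)}"
proof -
  interpret normalized_convex_curve D
    by unfold_locales (fact smooth normalized)+
  have "X = orth_bundle" and "\<Delta> = wall_incidence"
    by (simp_all add: X_def \<Delta>_def orth_bundle_def wall_incidence_def)
  then show ?thesis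
    using singular_values_orth_bundle singular_points_wall by (simp add: \<Psi>_def)
qed

end
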